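(* Let $q$ be a prime power with $q\equiv 1\pmod 3$, let $n$ be an integer, and let $\Lambda:=\mathbb{F}_q\setminus\{-1,-\xi,-\xi^2\}$. Then $$\delta^n\sum_{a\in\Lambda}\eta\Big(\frac{\xi+a}{1+a}\Big)+\delta^{2n}\sum_{a\in\Lambda}\eta^2\Big(\frac{\xi+a}{1+a}\Big)=\epsilon_1+\epsilon_2,$$ where $\epsilon_1=-2$ if $q-3n\equiv 1\pmod 9$ and $\epsilon_1=1$ otherwise, and $\epsilon_2=-2$ if $n\equiv 0\pmod 3$ and $\epsilon_2=1$ otherwise.
   Context: Let $q\equiv 1\pmod 3$, let $\xi\in\mathbb{F}_q$ be a fixed cube root of unity with $\xi\neq 1$, and let $\delta\in\mathbb{C}$ be a fixed cube root of unity with $\delta\neq1$. Let $\eta:\mathbb{F}_q\to\mathbb{C}$ be the cubic multiplicative character defined by $\eta(0)=0$ and, for $c\in\mathbb{F}_q^*$ and integers $j$, $\eta(c)=\delta^j$ if and only if $c^{\frac{q-1}{3}}=\xi^j$. We write $\eta^2(c)$ for $\eta(c)^2$. *)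

theory Defs
  imports Complex_Main
begin

definition cubic_char :: "'a::{field,finite} \<Rightarrow> complex \<Rightarrow> 'a \<Rightarrow> complex" where
  "cubic_char \<xi> \<delta> c =
     (if c = 0 then 0
      else \<delta> ^ (SOME j::nat. c ^ ((card (UNIV :: 'a set) - 1) div 3) = \<xi> ^ j))"

end

theory Submission
  imports Defs "HOL-Computational_Algebra.Polynomial"
begin

text \<open>Write \<open>q = 3m + 1\<close>. The Moebius map \<open>a \<mapsto> (\<xi> + a) / (1 + a)\<close> sends \<open>-1\<close> to \<open>\<infinity>\<close>,
  \<open>\<infinity>\<close> to \<open>1\<close> and \<open>-\<xi>\<close> to \<open>0\<close>, and fixes \<open>-\<xi>\<^sup>2\<close>; so it maps \<open>\<Lambda>\<close> bijectively onto
  the field minus \<open>{1, 0, -\<xi>\<^sup>2}\<close>. Since \<open>\<eta>\<close> and \<open>\<eta>\<^sup>2\<close> are nontrivial multiplicative characters,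
  their sums over the whole field vanish, and the two sums over \<open>\<Lambda>\<close> become
  \<open>-1 - \<eta>(-\<xi>\<^sup>2)\<^sup>r = -1 - \<delta> powi (-r m)\<close> for \<open>r = 1, 2\<close>. Hence the left-hand side equals
  \<open>-(x + x\<^sup>2) - (y + y\<^sup>2)\<close> with \<open>x = \<delta> powi n\<close> and \<open>y = \<delta> powi (n - m)\<close>, and for a cube root of
  unity \<open>x\<close> the sum \<open>x + x\<^sup>2\<close> is \<open>2\<close> if \<open>x = 1\<close> and \<open>-1\<close> otherwise.\<close>

lemma field_power_card_minus_one:
  fixes c :: "'a::{field,finite}"
  assumes "c \<noteq> 0"
  shows "c ^ (card (UNIV :: 'a set) - 1) = 1"
proof -
  let ?P = "\<Prod>y\<in>UNIV - {0::'a}. y"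
  have "c ^ (card (UNIV :: 'a set) - 1) * ?P = (\<Prod>y\<in>UNIV - {0}. c * y)"
    by (simp add: prod.distrib card_Diff_singleton)
  also have "\<dots> = ?P"
    by (rule prod.reindex_bij_witness[of _ "\<lambda>y. y / c" "\<lambda>y. c * y"]) (use assms in auto)
  finally show ?thesis
    by simp
qed

lemma ex_nonzero_power_ne_one:
  assumes "0 < m" "m < card (UNIV :: 'a::{field,finite} set) - 1"
  shows "\<exists>g::'a. g \<noteq> 0 \<and> g ^ m \<noteq> 1"
proof (rule ccontr)
  assume "\<not> ?thesis"
  hence roots: "UNIV - {0} \<subseteq> {x::'a. poly (monom 1 m - 1) x = 0}"
    by (auto simp: poly_monom)
  have "coeff (monom (1::'a) m - 1) m = 1"
    using assms(1) by simp
  hence nonzero: "monom (1::'a) m - 1 \<noteq> 0"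
    by (metis coeff_0 zero_neq_one)
  have "degree (monom (1::'a) m - 1) \<le> m"
    by (rule degree_diff_le) (auto simp: degree_monom_le)
  hence "card {x::'a. poly (monom 1 m - 1) x = 0} \<le> m"
    using card_poly_roots_bound[OF nonzero] by linarith
  moreover have "card (UNIV - {0::'a}) \<le> card {x::'a. poly (monom 1 m - 1) x = 0}"
    by (rule card_mono[OF _ roots]) simp
  ultimately show False
    using assms(2) by (simp add: card_Diff_singleton)
qed

lemma sum_multiplicative_eq_0:
  fixes f :: "'a::{field,finite} \<Rightarrow> 'b::idom"
  assumes mult: "\<And>c. f (g * c) = f g * f c" and "g \<noteq> 0" "f g \<noteq> 1"
  shows "(\<Sum>c\<in>UNIV. f c) = 0"
proof -
  have "(\<Sum>c\<in>UNIV. f c) = (\<Sum>c\<in>UNIV. f (g * c))"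
    by (rule sum.reindex_bij_witness[of _ "\<lambda>c. g * c" "\<lambda>c. c / g"]) (use assms in auto)
  also have "\<dots> = f g * (\<Sum>c\<in>UNIV. f c)"
    by (simp add: mult sum_distrib_left)
  finally have "(1 - f g) * (\<Sum>c\<in>UNIV. f c) = 0"
    by (simp add: algebra_simps)
  thus ?thesis
    using assms(3) by simp
qed

lemma cube_root_of_unity_sum_eq_0:
  fixes z :: "'a::idom"
  assumes "z ^ 3 = 1" "z \<noteq> 1"
  shows "z\<^sup>2 + z + 1 = 0"
proof -
  have "(z - 1) * (z\<^sup>2 + z + 1) = z ^ 3 - 1"
    by (simp add: algebra_simps power2_eq_square power3_eq_cube)
  thus ?thesis
    using assms by simp
qed

lemma cube_root_of_unity_square_ne_one:
  fixes z :: "'a::monoid_mult"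
  assumes "z ^ 3 = 1" "z \<noteq> 1"
  shows "z\<^sup>2 \<noteq> 1"
  using assms by (metis power3_eq_cube power2_eq_square mult_1_left)

lemma cube_root_of_unity_square_ne_minus_one:
  fixes z :: "'a::idom"
  assumes "z ^ 3 = 1" "z \<noteq> 1"
  shows "z\<^sup>2 \<noteq> -1"
  using assms cube_root_of_unity_sum_eq_0[OF assms] by auto

lemma cube_roots_of_unity:
  fixes \<xi> z :: "'a::idom"
  assumes "\<xi> ^ 3 = 1" "\<xi> \<noteq> 1" "z ^ 3 = 1"
  shows "z = 1 \<or> z = \<xi> \<or> z = \<xi>\<^sup>2"
proof -
  have "(z - 1) * (z - \<xi>) * (z - \<xi>\<^sup>2)
          = z ^ 3 - (\<xi>\<^sup>2 + \<xi> + 1) * z\<^sup>2 + (\<xi>\<^sup>2 + \<xi> + 1) * \<xi> * z - \<xi> ^ 3"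
    by (simp add: algebra_simps power2_eq_square power3_eq_cube)
  also have "\<dots> = 0"
    using assms cube_root_of_unity_sum_eq_0[OF assms(1,2)] by simp
  finally show ?thesis
    by auto
qed

lemma power_mod_three:
  fixes x :: "'a::monoid_mult"
  assumes "x ^ 3 = 1"
  shows "x ^ k = x ^ (k mod 3)"
proof -
  have "x ^ k = (x ^ 3) ^ (k div 3) * x ^ (k mod 3)"
    by (simp flip: power_mult power_add)
  thus ?thesis
    using assms by simp
qed

lemma power_eq_iff_mod_three:
  fixes \<xi> :: "'a::idom"
  assumes "\<xi> ^ 3 = 1" "\<xi> \<noteq> 1"
  shows "\<xi> ^ i = \<xi> ^ j \<longleftrightarrow> i mod 3 = j mod 3"
proof -
  have distinct: "\<xi> ^ a \<noteq> \<xi> ^ b" if "a < 3" "b < 3" "a \<noteq> b" for a b :: nat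
  proof -
    have "\<xi>\<^sup>2 \<noteq> \<xi>"
      using assms by (auto simp: power2_eq_square)
    moreover have "\<xi>\<^sup>2 \<noteq> 1"
      using cube_root_of_unity_square_ne_one[OF assms] .
    moreover have "a \<in> {0, 1, 2}" "b \<in> {0, 1, 2}"
      using that by auto
    ultimately show ?thesis
      using that(3) assms(2) by (auto dest: sym)
  qed
  have "\<xi> ^ i = \<xi> ^ j \<longleftrightarrow> \<xi> ^ (i mod 3) = \<xi> ^ (j mod 3)"
    using power_mod_three[OF assms(1)] by metis
  also have "\<dots> \<longleftrightarrow> i mod 3 = j mod 3"
    using distinct[of "i mod 3" "j mod 3"] by auto
  finally show ?thesis .
qed

lemma power_int_mod_three:
  fixes x :: "'a::division_ring"
  assumes "x ^ 3 = 1"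
  shows "x powi k = x powi (k mod 3)"
proof -
  have "x \<noteq> 0"
    using assms by auto
  hence "x powi k = (x powi 3) powi (k div 3) * x powi (k mod 3)"
    by (metis div_mult_mod_eq power_int_add power_int_mult mult.commute)
  thus ?thesis
    using assms by simp
qed

lemma power_double_eq_power_int_uminus:
  fixes x :: "'a::division_ring"
  assumes "x ^ 3 = 1"
  shows "x ^ (2 * k) = x powi (- int k)"
proof -
  have "x \<noteq> 0"
    using assms by auto
  hence "x ^ (2 * k) = x powi (3 * int k) * x powi (- int k)"
    by (simp flip: power_int_add power_int_of_nat)
  also have "x powi (3 * int k) = 1"
    using assms by (simp add: power_int_mult)
  finally show ?thesis
    by simp
qed

lemma cube_root_of_unity_power_int_sum:
  fixes \<delta> :: "'a::field"
  assumes "\<delta> ^ 3 = 1" "\<delta> \<noteq> 1"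
  shows "\<delta> powi k + \<delta> powi (2 * k) = (if k mod 3 = 0 then 2 else -1)"
proof -
  have quad: "\<delta>\<^sup>2 + \<delta> + 1 = 0"
    using cube_root_of_unity_sum_eq_0[OF assms] .
  have "(2 * k) mod 3 = (2 * (k mod 3)) mod 3"
    by (simp add: mod_mult_right_eq)
  hence "\<delta> powi (2 * k) = \<delta> powi ((2 * (k mod 3)) mod 3)"
    using power_int_mod_three[OF assms(1)] by metis
  moreover have "\<delta> powi k = \<delta> powi (k mod 3)"
    using power_int_mod_three[OF assms(1)] .
  moreover have "k mod 3 \<in> {0, 1, 2}"
    by auto
  ultimately show ?thesis
    using quad by (auto simp: algebra_simps eq_neg_iff_add_eq_0)
qed

lemma mod_9_eq_1_iff:
  fixes q m n :: int
  assumes "q = 3 * m + 1"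
  shows "(q - 3 * n) mod 9 = 1 \<longleftrightarrow> (n - m) mod 3 = 0"
proof -
  have "(q - 3 * n) mod 9 = 1 \<longleftrightarrow> 3 * 3 dvd 3 * (m - n)"
    using assms mod_eq_dvd_iff[of "q - 3 * n" 9 1] by (simp add: algebra_simps)
  also have "\<dots> \<longleftrightarrow> 3 dvd m - n"
    by (rule dvd_times_left_cancel_iff) simp
  finally show ?thesis
    by (simp add: mod_eq_0_iff_dvd dvd_diff_commute)
qed

lemma moebius_bij_betw:
  fixes \<xi> :: "'a::field"
  assumes "\<xi> \<noteq> 1"
  shows "bij_betw (\<lambda>a. (\<xi> + a) / (1 + a)) (UNIV - {-1}) (UNIV - {1})"
proof (rule bij_betw_byWitness[where f' = "\<lambda>c. (\<xi> - c) / (c - 1)"])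
  show "\<forall>a\<in>UNIV - {-1}. (\<xi> - (\<xi> + a) / (1 + a)) / ((\<xi> + a) / (1 + a) - 1) = a"
  proof
    fix a :: 'a
    assume "a \<in> UNIV - {-1}"
    hence a: "1 + a \<noteq> 0"
      by (auto simp: add_eq_0_iff)
    have "\<xi> - (\<xi> + a) / (1 + a) = a * ((\<xi> - 1) / (1 + a))"
      and "(\<xi> + a) / (1 + a) - 1 = (\<xi> - 1) / (1 + a)"
      using a by (simp_all add: field_simps)
    thus "(\<xi> - (\<xi> + a) / (1 + a)) / ((\<xi> + a) / (1 + a) - 1) = a"
      using a assms by simp
  qed
  show "\<forall>c\<in>UNIV - {1}. (\<xi> + (\<xi> - c) / (c - 1)) / (1 + (\<xi> - c) / (c - 1)) = c"
  proof
    fix c :: 'a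
    assume "c \<in> UNIV - {1}"
    hence c: "c - 1 \<noteq> 0"
      by simp
    have "\<xi> + (\<xi> - c) / (c - 1) = c * ((\<xi> - 1) / (c - 1))"
      and "1 + (\<xi> - c) / (c - 1) = (\<xi> - 1) / (c - 1)"
      using c by (simp_all add: field_simps)
    thus "(\<xi> + (\<xi> - c) / (c - 1)) / (1 + (\<xi> - c) / (c - 1)) = c"
      using c assms by simp
  qed
  show "(\<lambda>a. (\<xi> + a) / (1 + a)) ` (UNIV - {-1}) \<subseteq> UNIV - {1}"
    using assms by (auto simp: field_simps add_eq_0_iff)
  show "(\<lambda>c. (\<xi> - c) / (c - 1)) ` (UNIV - {1}) \<subseteq> UNIV - {-1}"
    using assms by (auto simp: field_simps)
qed

lemma moebius_bij_betw_cube_root: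
  fixes \<xi> :: "'a::field"
  assumes "\<xi> ^ 3 = 1" "\<xi> \<noteq> 1"
  shows "bij_betw (\<lambda>a. (\<xi> + a) / (1 + a)) (UNIV - {-1, -\<xi>, -\<xi>\<^sup>2}) (UNIV - {1, 0, -\<xi>\<^sup>2})"
proof -
  let ?f = "\<lambda>a. (\<xi> + a) / (1 + a)"
  have bij: "bij_betw ?f (UNIV - {-1}) (UNIV - {1})"
    using moebius_bij_betw[OF assms(2)] .
  have sq_ne_1: "\<xi>\<^sup>2 \<noteq> 1"
    using cube_root_of_unity_square_ne_one[OF assms] .
  have "\<xi> - \<xi>\<^sup>2 = - \<xi>\<^sup>2 * (1 - \<xi>\<^sup>2)"
    using assms(1) by algebra
  hence fixed: "(\<xi> - \<xi>\<^sup>2) / (1 - \<xi>\<^sup>2) = -\<xi>\<^sup>2"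
    using sq_ne_1 by (simp add: field_simps)
  have C: "{-\<xi>, -\<xi>\<^sup>2} \<subseteq> UNIV - {-1}"
    using assms(2) sq_ne_1 by auto
  have D: "{0, -\<xi>\<^sup>2} \<subseteq> UNIV - {1}"
    using cube_root_of_unity_square_ne_minus_one[OF assms] by (auto simp: minus_equation_iff)
  have "bij_betw ?f {-\<xi>, -\<xi>\<^sup>2} {0, -\<xi>\<^sup>2}"
    by (rule bij_betw_subset[OF bij C]) (simp add: fixed)
  from bij_betw_DiffI[OF bij this C D] show ?thesis
    by (simp add: Diff_insert2 [symmetric] insert_commute)
qed

locale cubic_character =
  fixes \<xi> :: "'a::{field,finite}" and \<delta> :: complex
  assumes card_mod_3: "card (UNIV :: 'a set) mod 3 = 1"
    and xi_cube: "\<xi> ^ 3 = 1" and xi_ne_1: "\<xi> \<noteq> 1"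
    and delta_cube: "\<delta> ^ 3 = 1" and delta_ne_1: "\<delta> \<noteq> 1"
begin

abbreviation \<eta> :: "'a \<Rightarrow> complex" where
  "\<eta> \<equiv> cubic_char \<xi> \<delta>"

definition m :: nat where
  "m = (card (UNIV :: 'a set) - 1) div 3"

lemma card_UNIV_eq: "card (UNIV :: 'a set) = 3 * m + 1"
  using card_mod_3 unfolding m_def by presburger

lemma m_pos: "0 < m"
proof -
  have "card {0::'a, 1} \<le> card (UNIV :: 'a set)"
    by (rule card_mono) auto
  thus ?thesis
    using card_UNIV_eq by simp
qed

lemma power_m_eq_xi_power:
  assumes "c \<noteq> 0"
  shows "\<exists>k. c ^ m = \<xi> ^ k"
proof -
  have "(c ^ m) ^ 3 = 1"
    using field_power_card_minus_one[OF assms] card_UNIV_eq by (simp flip: power_mult add: mult.commute)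
  thus ?thesis
    using cube_roots_of_unity[OF xi_cube xi_ne_1] by (metis power_0 power_one_right)
qed

lemma cubic_char_eq:
  assumes "c \<noteq> 0" "c ^ m = \<xi> ^ k"
  shows "\<eta> c = \<delta> ^ k"
proof -
  define j where "j = (SOME j. c ^ m = \<xi> ^ j)"
  have "c ^ m = \<xi> ^ j"
    unfolding j_def using someI[of "\<lambda>j. c ^ m = \<xi> ^ j", OF assms(2)] .
  hence "j mod 3 = k mod 3"
    using assms(2) power_eq_iff_mod_three[OF xi_cube xi_ne_1] by simp
  hence "\<delta> ^ j = \<delta> ^ k"
    using power_eq_iff_mod_three[OF delta_cube delta_ne_1] by simp
  thus ?thesis
    using assms(1) unfolding cubic_char_def j_def m_def by simp
qed

lemma cubic_char_zero [simp]: "\<eta> 0 = 0"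
  by (simp add: cubic_char_def)

lemma cubic_char_mult: "\<eta> (a * b) = \<eta> a * \<eta> b"
proof (cases "a = 0 \<or> b = 0")
  case True
  thus ?thesis
    by auto
next
  case False
  then obtain i j where "a ^ m = \<xi> ^ i" "b ^ m = \<xi> ^ j"
    using power_m_eq_xi_power by blast
  moreover from this have "(a * b) ^ m = \<xi> ^ (i + j)"
    by (simp add: power_mult_distrib power_add)
  ultimately show ?thesis
    using False cubic_char_eq[of "a * b" "i + j"] cubic_char_eq[of a i] cubic_char_eq[of b j]
    by (simp add: power_add)
qed

lemma cubic_char_cube:
  assumes "c \<noteq> 0"
  shows "\<eta> c ^ 3 = 1"
proof -
  obtain k where "c ^ m = \<xi> ^ k"
    using power_m_eq_xi_power[OF assms] ..
  hence "\<eta> c ^ 3 = (\<delta> ^ 3) ^ k"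
    using cubic_char_eq[OF assms] by (simp flip: power_mult add: mult.commute)
  thus ?thesis
    using delta_cube by simp
qed

lemma cubic_char_one: "\<eta> 1 = 1"
  using cubic_char_eq[of 1 0] by simp

lemma cubic_char_minus_one: "\<eta> (-1) = 1"
proof -
  have "\<eta> (-1) ^ 2 = 1"
    using cubic_char_mult[of "-1" "-1"] cubic_char_one by (simp add: power2_eq_square)
  moreover have "\<eta> (-1) ^ 3 = 1"
    using cubic_char_cube by simp
  ultimately show ?thesis
    by (metis power3_eq_cube power2_eq_square mult_1_right mult.assoc)
qed

lemma xi_nonzero: "\<xi> \<noteq> 0"
  using xi_cube by auto

lemma cubic_char_xi: "\<eta> \<xi> = \<delta> ^ m"
  by (rule cubic_char_eq[OF xi_nonzero]) simp

lemma cubic_char_nontrivial: "\<exists>g. g \<noteq> 0 \<and> \<eta> g \<noteq> 1"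
proof -
  have "\<exists>g :: 'a. g \<noteq> 0 \<and> g ^ m \<noteq> 1"
    by (rule ex_nonzero_power_ne_one) (use m_pos card_UNIV_eq in auto)
  then obtain g :: 'a where g: "g \<noteq> 0" "g ^ m \<noteq> 1"
    by blast
  obtain k where k: "g ^ m = \<xi> ^ k"
    using power_m_eq_xi_power[OF g(1)] ..
  have "k mod 3 \<noteq> 0"
    using g(2) k power_eq_iff_mod_three[OF xi_cube xi_ne_1, of k 0] by auto
  hence "\<eta> g \<noteq> 1"
    using cubic_char_eq[OF g(1) k] power_eq_iff_mod_three[OF delta_cube delta_ne_1, of k 0] by auto
  thus ?thesis
    using g(1) by blast
qed

lemma sum_cubic_char_power_eq_0:
  assumes "r \<in> {1, 2}"
  shows "(\<Sum>c\<in>UNIV. \<eta> c ^ r) = 0"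
proof -
  obtain g where g: "g \<noteq> 0" "\<eta> g \<noteq> 1"
    using cubic_char_nontrivial by blast
  have "\<eta> g ^ r \<noteq> 1"
    using assms g cube_root_of_unity_square_ne_one[OF cubic_char_cube[OF g(1)] g(2)] by auto
  thus ?thesis
    using sum_multiplicative_eq_0[of "\<lambda>c. \<eta> c ^ r" g] g(1)
    by (simp add: cubic_char_mult power_mult_distrib)
qed

lemma sum_cubic_char_moebius:
  assumes "r \<in> {1, 2}"
  shows "(\<Sum>a\<in>UNIV - {-1, -\<xi>, -\<xi>\<^sup>2}. \<eta> ((\<xi> + a) / (1 + a)) ^ r) = -1 - \<delta> ^ (2 * m * r)"
proof -
  have xi_sq: "\<eta> (-\<xi>\<^sup>2) = \<delta> ^ (2 * m)"
    using cubic_char_mult[of "-1" "\<xi>\<^sup>2"] cubic_char_mult[of \<xi> \<xi>]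
    by (simp add: cubic_char_minus_one cubic_char_xi power2_eq_square mult_2 power_add)
  have "1 \<notin> {0, -\<xi>\<^sup>2}" "0 \<notin> {-\<xi>\<^sup>2}"
    using cube_root_of_unity_square_ne_minus_one[OF xi_cube xi_ne_1] xi_cube
    by (auto simp: minus_equation_iff)
  hence removed: "(\<Sum>c\<in>{1, 0, -\<xi>\<^sup>2}. \<eta> c ^ r) = 1 + \<delta> ^ (2 * m * r)"
    using assms by (auto simp: cubic_char_one xi_sq power_mult)
  have "(\<Sum>a\<in>UNIV - {-1, -\<xi>, -\<xi>\<^sup>2}. \<eta> ((\<xi> + a) / (1 + a)) ^ r)
          = (\<Sum>c\<in>UNIV - {1, 0, -\<xi>\<^sup>2}. \<eta> c ^ r)"
    using sum.reindex_bij_betw[OF moebius_bij_betw_cube_root[OF xi_cube xi_ne_1]] .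
  also have "\<dots> = (\<Sum>c\<in>UNIV. \<eta> c ^ r) - (\<Sum>c\<in>{1, 0, -\<xi>\<^sup>2}. \<eta> c ^ r)"
    by (rule sum_diff) auto
  finally show ?thesis
    using removed sum_cubic_char_power_eq_0[OF assms] by simp
qed

end

theorem lemma4p2:
  fixes \<xi> :: "'a::{field,finite}" and \<delta> :: complex and n :: int
  assumes q_mod: "card (UNIV :: 'a set) mod 3 = 1"
    and xi3: "\<xi> ^ 3 = 1" and xi1: "\<xi> \<noteq> 1"
    and delta3: "\<delta> ^ 3 = 1" and delta1: "\<delta> \<noteq> 1"
  defines "\<Lambda> \<equiv> UNIV - {-1, -\<xi>, -(\<xi>^2)}"
  defines "\<epsilon>\<^sub>1 \<equiv> (if (int (card (UNIV :: 'a set)) - 3 * n) mod 9 = 1 then -2 else 1 :: complex)"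
  defines "\<epsilon>\<^sub>2 \<equiv> (if n mod 3 = 0 then -2 else 1 :: complex)"
  shows "\<delta> powi n * (\<Sum>a\<in>\<Lambda>. cubic_char \<xi> \<delta> ((\<xi> + a) / (1 + a)))
         + \<delta> powi (2 * n) * (\<Sum>a\<in>\<Lambda>. (cubic_char \<xi> \<delta> ((\<xi> + a) / (1 + a)))^2)
         = \<epsilon>\<^sub>1 + \<epsilon>\<^sub>2"
proof -
  interpret cubic_character \<xi> \<delta>
    using assms by unfold_locales
  have sum_\<eta>: "(\<Sum>a\<in>\<Lambda>. cubic_char \<xi> \<delta> ((\<xi> + a) / (1 + a))) = -1 - \<delta> powi (- int m)"
    using sum_cubic_char_moebius[of 1] power_double_eq_power_int_uminus[OF delta3, of m]
    unfolding \<Lambda>_def by simp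
  have sum_\<eta>_square:
    "(\<Sum>a\<in>\<Lambda>. (cubic_char \<xi> \<delta> ((\<xi> + a) / (1 + a)))^2) = -1 - \<delta> powi (- int (2 * m))"
    using sum_cubic_char_moebius[of 2] power_double_eq_power_int_uminus[OF delta3, of "2 * m"]
    unfolding \<Lambda>_def by (simp add: mult.commute)
  have q: "int (card (UNIV :: 'a set)) = 3 * int m + 1"
    using card_UNIV_eq by simp
  have "\<delta> \<noteq> 0"
    using delta3 by auto
  hence "\<delta> powi n * (-1 - \<delta> powi (- int m)) + \<delta> powi (2 * n) * (-1 - \<delta> powi (- int (2 * m)))
          = -(\<delta> powi n + \<delta> powi (2 * n)) - (\<delta> powi (n - m) + \<delta> powi (2 * (n - m)))"
    by (simp add: algebra_simps flip: power_int_add)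
  thus ?thesis
    using cube_root_of_unity_power_int_sum[OF delta3 delta1, of n]
      cube_root_of_unity_power_int_sum[OF delta3 delta1, of "n - m"]
    unfolding sum_\<eta> sum_\<eta>_square \<epsilon>\<^sub>1_def \<epsilon>\<^sub>2_def mod_9_eq_1_iff[OF q] by simp
qed

end
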